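(* Let $p$ and $q$ be primes with $q\equiv 1 \pmod p$. Let $N=C_q$ be a cyclic group of order $q$ and let $H=\langle x\rangle\times\langle y\rangle$ be an elementary abelian group of order $p^2$. Let $\langle x\rangle$ act faithfully on $N$ and let $\langle y\rangle$ act trivially on $N$, and let $G=N\rtimes H$ be the corresponding semidirect product. Let $U=N\langle x\rangle$ and $V=N\langle xy\rangle$. Then: (i) $U$ and $V$ are both subnormal in $G$, and $G=UV$; (ii) $O_p(G)=\langle y\rangle$ and $O_p(U)=O_p(V)=1$; in particular $O_p(G)\neq O_p(U)O_p(V)$.
   Context: For a finite group $X$ and prime $p$, $O_p(X)$ denotes the largest normal $p$-subgroup of $X$. *)

theory Defs
  imports "HOL-Algebra.Algebra"
begin

definition p_subgroup :: "('a, 'b) monoid_scheme \<Rightarrow> nat \<Rightarrow> 'a set \<Rightarrow> bool" where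
  "p_subgroup G p P \<longleftrightarrow> subgroup P G \<and> finite P \<and> (\<exists>k. card P = p ^ k)"

definition O_p :: "('a, 'b) monoid_scheme \<Rightarrow> nat \<Rightarrow> 'a set" where
  "O_p Gr p = (THE P. normal P Gr \<and> p_subgroup Gr p P \<and>
                 (\<forall>Q. normal Q Gr \<and> p_subgroup Gr p Q \<longrightarrow> Q \<subseteq> P))"

inductive subnormal :: "('a, 'b) monoid_scheme \<Rightarrow> 'a set \<Rightarrow> bool" for G where
  top: "subnormal G (carrier G)"
| step: "subnormal G K \<Longrightarrow> normal H (G\<lparr>carrier := K\<rparr>) \<Longrightarrow> subnormal G H"

end

theory Submission
  imports Defs
begin

(* Since N has prime order q different from p, a normal p-subgroup Q of G, U or V meets N
   trivially, so the commutators of Q with N, which lie in Q and in N, vanish: Q centralizes N.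
   Because <x> acts faithfully, the centralizer of N is N<y> in G, and only N in U and in V
   (a power (xy)^i centralizes N only if x^i does, i.e. only if it is trivial). The p-elements
   of N<y> lie in <y>, and N has none except 1. Subnormality is immediate because G/N is
   abelian, so every subgroup containing N is normal; and UV contains N, x and y = x^-1 (xy). *)

lemma subnormal_if_normal: "normal H G \<Longrightarrow> subnormal G H"
  by (rule subnormal.step[OF subnormal.top]) simp

lemma O_p_eqI:
  assumes "normal P Gr" "p_subgroup Gr p P"
    and "\<And>Q. normal Q Gr \<Longrightarrow> p_subgroup Gr p Q \<Longrightarrow> Q \<subseteq> P"
  shows "O_p Gr p = P"
  unfolding O_p_def using assms by (intro the_equality) blast+

definition centralizer :: "('a, 'b) monoid_scheme \<Rightarrow> 'a set \<Rightarrow> 'a set" where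
  "centralizer G A = {g \<in> carrier G. \<forall>a \<in> A. g \<otimes>\<^bsub>G\<^esub> a = a \<otimes>\<^bsub>G\<^esub> g}"

context group
begin

lemma inv_commute:
  assumes "g \<in> carrier G" "a \<in> carrier G" "g \<otimes> a = a \<otimes> g"
  shows "inv g \<otimes> a = a \<otimes> inv g"
proof -
  have "inv g \<otimes> a = inv g \<otimes> (a \<otimes> g) \<otimes> inv g"
    using assms(1,2) by (simp add: m_assoc)
  also have "\<dots> = inv g \<otimes> (g \<otimes> a) \<otimes> inv g"
    using assms(3) by simp
  also have "\<dots> = a \<otimes> inv g"
    using assms(1,2) by (simp add: m_assoc[symmetric])
  finally show ?thesis .
qed

lemma conj_eq_iff_commute:
  "g \<in> carrier G \<Longrightarrow> a \<in> carrier G \<Longrightarrow> g \<otimes> a \<otimes> inv g = a \<longleftrightarrow> g \<otimes> a = a \<otimes> g"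
  using inv_solve_right[of a "g \<otimes> a" g] by auto

lemma centralizerI:
  "g \<in> carrier G \<Longrightarrow> (\<And>a. a \<in> A \<Longrightarrow> g \<otimes> a = a \<otimes> g) \<Longrightarrow> g \<in> centralizer G A"
  by (simp add: centralizer_def)

lemma centralizerD:
  "g \<in> centralizer G A \<Longrightarrow> a \<in> A \<Longrightarrow> g \<otimes> a = a \<otimes> g"
  by (simp add: centralizer_def)

lemma centralizer_subset_carrier: "centralizer G A \<subseteq> carrier G"
  by (auto simp: centralizer_def)

lemma centralizer_iff_conj:
  "A \<subseteq> carrier G \<Longrightarrow> g \<in> centralizer G A \<longleftrightarrow> g \<in> carrier G \<and> (\<forall>a \<in> A. g \<otimes> a \<otimes> inv g = a)"
  using conj_eq_iff_commute by (auto simp: centralizer_def)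

lemma subgroup_centralizer:
  assumes "A \<subseteq> carrier G" shows "subgroup (centralizer G A) G"
proof (rule subgroupI)
  have "\<one> \<in> centralizer G A"
    using assms by (auto intro!: centralizerI)
  then show "centralizer G A \<noteq> {}" by blast
next
  fix g assume "g \<in> centralizer G A"
  then show "inv g \<in> centralizer G A"
    using assms centralizer_subset_carrier
    by (intro centralizerI) (auto intro: inv_commute centralizerD)
next
  fix g h assume g: "g \<in> centralizer G A" and h: "h \<in> centralizer G A"
  then have gh: "g \<in> carrier G" "h \<in> carrier G"
    using centralizer_subset_carrier by auto
  show "g \<otimes> h \<in> centralizer G A"
  proof (rule centralizerI)
    fix a assume a: "a \<in> A"
    with assms have "a \<in> carrier G" by blast
    with gh have "g \<otimes> h \<otimes> a = g \<otimes> (a \<otimes> h)"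
      using centralizerD[OF h a] by (simp add: m_assoc)
    also have "\<dots> = a \<otimes> (g \<otimes> h)"
      using gh \<open>a \<in> carrier G\<close> centralizerD[OF g a] by (simp add: m_assoc[symmetric])
    finally show "g \<otimes> h \<otimes> a = a \<otimes> (g \<otimes> h)" .
  qed (use gh in simp)
qed (use centralizer_subset_carrier in auto)

lemma centralizer_swap:
  "A \<subseteq> carrier G \<Longrightarrow> B \<subseteq> centralizer G A \<Longrightarrow> A \<subseteq> centralizer G B"
  by (auto simp: centralizer_def)

lemma generate_subset_centralizer:
  "A \<subseteq> carrier G \<Longrightarrow> S \<subseteq> centralizer G A \<Longrightarrow> generate G S \<subseteq> centralizer G A"
  by (simp add: generate_subgroup_incl subgroup_centralizer)

lemma generate_commuting_subset_centralizer:
  assumes "S \<subseteq> carrier G" "S \<subseteq> centralizer G S"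
  shows "generate G S \<subseteq> centralizer G (generate G S)"
proof -
  have "generate G S \<subseteq> centralizer G S"
    using assms by (rule generate_subset_centralizer)
  then have "S \<subseteq> centralizer G (generate G S)"
    by (rule centralizer_swap[OF assms(1)])
  then show ?thesis
    using generate_subset_centralizer generate_incl assms(1) by blast
qed

lemma centralizer_set_mult:
  assumes "A \<subseteq> carrier G" "B \<subseteq> carrier G" "g \<in> centralizer G A" "g \<in> centralizer G B"
  shows "g \<in> centralizer G (A <#> B)"
proof (rule centralizerI)
  show g: "g \<in> carrier G" using assms(3) centralizer_subset_carrier by blast
  fix c assume "c \<in> A <#> B"
  then obtain a b where ab: "a \<in> A" "b \<in> B" "c = a \<otimes> b"
    unfolding set_mult_def by blast
  with assms(1,2) have "a \<in> carrier G" "b \<in> carrier G" by auto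
  with g ab show "g \<otimes> c = c \<otimes> g"
    using centralizerD[OF assms(3) ab(1)] centralizerD[OF assms(4) ab(2)]
    by (metis m_assoc)
qed

lemma normal_if_subset_center:
  assumes "subgroup A G" "A \<subseteq> centralizer G (carrier G)"
  shows "A \<lhd> G"
  unfolding normal_inv_iff
proof (intro conjI ballI)
  fix g a assume "g \<in> carrier G" "a \<in> A"
  then show "g \<otimes> a \<otimes> inv g \<in> A"
    using assms conj_eq_iff_commute[of g a] by (auto simp: centralizer_def subgroup.mem_carrier)
qed (fact assms(1))

lemma pow_card_subgroup:
  assumes "subgroup K G" "finite K" "a \<in> K"
  shows "a [^] card K = \<one>"
proof -
  interpret K: group "G\<lparr>carrier := K\<rparr>"
    using assms(1) by (rule subgroup_imp_group)
  have "a [^]\<^bsub>G\<lparr>carrier := K\<rparr>\<^esub> order (G\<lparr>carrier := K\<rparr>) = \<one>\<^bsub>G\<lparr>carrier := K\<rparr>\<^esub>"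
    using assms(3) by (intro K.pow_order_eq_1) simp
  then show ?thesis
    by (simp add: order_def nat_pow_consistent[symmetric])
qed

lemma eq_one_if_pow_coprime:
  assumes "a \<in> carrier G" "a [^] (m::nat) = \<one>" "a [^] (n::nat) = \<one>" "coprime m n"
  shows "a = \<one>"
proof -
  have "ord a dvd m" "ord a dvd n"
    using assms(1-3) pow_eq_id by blast+
  with assms(4) have "ord a = 1"
    using coprime_common_divisor_nat by blast
  with assms(1) show ?thesis
    using ord_eq_1 by blast
qed

lemma coprime_subgroups_Int:
  assumes "subgroup A G" "subgroup B G" "finite A" "finite B" "coprime (card A) (card B)"
  shows "A \<inter> B = {\<one>}"
proof -
  have "a = \<one>" if a: "a \<in> A" "a \<in> B" for a
  proof (rule eq_one_if_pow_coprime)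
    show "a \<in> carrier G"
      using subgroup.mem_carrier[OF assms(1) a(1)] .
    show "a [^] card A = \<one>" "a [^] card B = \<one>"
      using pow_card_subgroup[OF assms(1,3) a(1)] pow_card_subgroup[OF assms(2,4) a(2)] .
  qed (fact assms(5))
  moreover have "\<one> \<in> A \<inter> B"
    using subgroup.one_closed[OF assms(1)] subgroup.one_closed[OF assms(2)] by simp
  ultimately show ?thesis by auto
qed

lemma commutator_eq_one_imp_commute:
  assumes "a \<in> carrier G" "b \<in> carrier G" "a \<otimes> b \<otimes> inv a \<otimes> inv b = \<one>"
  shows "a \<otimes> b = b \<otimes> a"
  using assms conj_eq_iff_commute[of a b] inv_equality[of "a \<otimes> b \<otimes> inv a" "inv b"] by simp

lemma mutually_normalizing_coprime_subgroups_commute: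
  assumes A: "subgroup A G" and B: "subgroup B G" and fin: "finite A" "finite B"
    and coprime: "coprime (card A) (card B)"
    and A_normalizes_B: "\<And>a b. a \<in> A \<Longrightarrow> b \<in> B \<Longrightarrow> a \<otimes> b \<otimes> inv a \<in> B"
    and B_normalizes_A: "\<And>a b. a \<in> A \<Longrightarrow> b \<in> B \<Longrightarrow> b \<otimes> a \<otimes> inv b \<in> A"
  shows "A \<subseteq> centralizer G B"
proof
  fix a assume a: "a \<in> A"
  then have a_carr: "a \<in> carrier G"
    by (rule subgroup.mem_carrier[OF A])
  show "a \<in> centralizer G B"
  proof (rule centralizerI[OF a_carr])
    fix b assume b: "b \<in> B"
    then have b_carr: "b \<in> carrier G"
      by (rule subgroup.mem_carrier[OF B])
    have "a \<otimes> b \<otimes> inv a \<otimes> inv b \<in> B"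
      using subgroup.m_closed[OF B A_normalizes_B[OF a b] subgroup.m_inv_closed[OF B b]] .
    moreover have "a \<otimes> (b \<otimes> inv a \<otimes> inv b) \<in> A"
      using subgroup.m_closed[OF A a B_normalizes_A[OF subgroup.m_inv_closed[OF A a] b]] .
    ultimately have "a \<otimes> b \<otimes> inv a \<otimes> inv b \<in> A \<inter> B"
      using a_carr b_carr by (simp add: m_assoc)
    then have "a \<otimes> b \<otimes> inv a \<otimes> inv b = \<one>"
      using coprime_subgroups_Int[OF A B fin coprime] by blast
    then show "a \<otimes> b = b \<otimes> a"
      by (rule commutator_eq_one_imp_commute[OF a_carr b_carr])
  qed
qed

lemma prime_card_subgroup_abelian:
  assumes "subgroup N G" "Factorial_Ring.prime (card N)"
  shows "N \<subseteq> centralizer G N"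
proof
  fix a assume a: "a \<in> N"
  have fin: "finite N"
  proof (rule ccontr)
    assume "infinite N"
    with assms(2) show False by simp
  qed
  have carr: "a \<in> carrier G"
    using subgroup.mem_carrier[OF assms(1) a] .
  have "N \<subseteq> centralizer G {a}"
  proof (cases "a = \<one>")
    case True
    show ?thesis
    proof
      fix b assume "b \<in> N"
      then have "b \<in> carrier G"
        by (rule subgroup.mem_carrier[OF assms(1)])
      with True show "b \<in> centralizer G {a}"
        by (intro centralizerI) simp_all
    qed
  next
    case False
    have "ord a dvd card N"
      using pow_card_subgroup[OF assms(1) fin a] pow_eq_id[OF carr] by simp
    moreover have "ord a \<noteq> 1"
      using False ord_eq_1[OF carr] by simp
    ultimately have "ord a = card N"
      using assms(2) prime_nat_iff by blast
    then have "card (generate G {a}) = card N"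
      using generate_pow_card[OF carr] by simp
    moreover have "generate G {a} \<subseteq> N"
      using a assms(1) by (intro generate_subgroup_incl) auto
    ultimately have "generate G {a} = N"
      using fin card_subset_eq by blast
    moreover have "generate G {a} \<subseteq> centralizer G {a}"
      using carr by (intro generate_subset_centralizer) (auto intro!: centralizerI)
    ultimately show ?thesis by simp
  qed
  then show "a \<in> centralizer G N"
    using carr centralizerD[of _ "{a}"] by (intro centralizerI) (auto intro: sym)
qed

lemma set_mult_one: "A \<subseteq> carrier G \<Longrightarrow> A <#> {\<one>} = A"
  unfolding set_mult_def by force

lemma subset_set_mult_left: "subgroup K G \<Longrightarrow> A \<subseteq> carrier G \<Longrightarrow> A \<subseteq> A <#> K"
  unfolding set_mult_def using subgroup.one_closed r_one by fastforce

lemma subset_set_mult_right: "subgroup A G \<Longrightarrow> K \<subseteq> carrier G \<Longrightarrow> K \<subseteq> A <#> K"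
  unfolding set_mult_def using subgroup.one_closed l_one by fastforce

lemma set_mult_subset_subgroup:
  "subgroup S G \<Longrightarrow> A \<subseteq> S \<Longrightarrow> B \<subseteq> S \<Longrightarrow> A <#> B \<subseteq> S"
  using mono_set_mult[of A S B S G] subgroup_mult_id by simp

lemma subgroup_normal_set_mult: "N \<lhd> G \<Longrightarrow> subgroup K G \<Longrightarrow> subgroup (N <#> K) G"
  by (rule second_isomorphism_grp.normal_set_mult_subgroup)
    (simp add: second_isomorphism_grp_def second_isomorphism_grp_axioms_def)

lemma generate_subset_normal_set_mult:
  assumes "N \<lhd> G" "subgroup K G" "S \<subseteq> N \<union> K"
  shows "generate G S \<subseteq> N <#> K"
proof (rule generate_subgroup_incl)
  have N: "subgroup N G"
    using assms(1) by (rule normal_imp_subgroup)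
  have "N \<subseteq> N <#> K" "K \<subseteq> N <#> K"
    using subset_set_mult_left[OF assms(2) subgroup.subset[OF N]]
      subset_set_mult_right[OF N subgroup.subset[OF assms(2)]] .
  with assms(3) show "S \<subseteq> N <#> K" by blast
qed (rule subgroup_normal_set_mult[OF assms(1,2)])

lemma set_mult_Int_subgroup:
  assumes "subgroup C G" "A \<subseteq> C" "B \<subseteq> carrier G"
  shows "(A <#> B) \<inter> C = A <#> (B \<inter> C)"
proof
  show "(A <#> B) \<inter> C \<subseteq> A <#> (B \<inter> C)"
  proof
    fix g assume "g \<in> (A <#> B) \<inter> C"
    then obtain a b where ab: "a \<in> A" "b \<in> B" "g = a \<otimes> b" and "g \<in> C"
      unfolding set_mult_def by blast
    have a: "a \<in> C" "a \<in> carrier G"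
      using ab(1) assms(2) subgroup.mem_carrier[OF assms(1)] by auto
    have "b = inv a \<otimes> g"
      using ab a assms(3) by (auto simp: m_assoc[symmetric])
    then have "b \<in> C"
      using assms(1) a(1) \<open>g \<in> C\<close> by (simp add: subgroup.m_closed subgroup.m_inv_closed)
    with ab show "g \<in> A <#> (B \<inter> C)"
      unfolding set_mult_def by blast
  qed
  show "A <#> (B \<inter> C) \<subseteq> (A <#> B) \<inter> C"
    using assms(1,2) set_mult_subset_subgroup[of C A "B \<inter> C"] mono_set_mult[of A A "B \<inter> C" B G]
    by blast
qed

lemma set_mult_normal_if_abelian_complement:
  assumes N: "N \<lhd> G" and G: "N <#> H = carrier G" and H: "H \<subseteq> centralizer G H"
    and L: "subgroup L G" "L \<subseteq> H"
  shows "N <#> L \<lhd> G"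
  unfolding normal_inv_iff
proof (intro conjI ballI)
  show "subgroup (N <#> L) G"
    using N L(1) by (rule subgroup_normal_set_mult)
  have N_sub: "subgroup N G"
    using N by (rule normal_imp_subgroup)
  fix g u assume "g \<in> carrier G" "u \<in> N <#> L"
  then obtain m h n k where m: "m \<in> N" and h: "h \<in> H" and g: "g = m \<otimes> h"
    and n: "n \<in> N" and k: "k \<in> L" and u: "u = n \<otimes> k"
    using G unfolding set_mult_def by blast
  have "h \<in> carrier G"
    using h H centralizer_subset_carrier by blast
  then have carr: "m \<in> carrier G" "h \<in> carrier G" "n \<in> carrier G" "k \<in> carrier G"
    using m n k subgroup.mem_carrier[OF N_sub] subgroup.mem_carrier[OF L(1)] by auto
  have "h \<otimes> k = k \<otimes> h"
    using H h k L(2) by (auto dest: centralizerD)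
  then have hk: "k \<otimes> inv h = inv h \<otimes> k"
    using inv_commute carr(2,4) by simp
  have "g \<otimes> u \<otimes> inv g = m \<otimes> h \<otimes> n \<otimes> (k \<otimes> inv h) \<otimes> inv m"
    using g u carr by (simp add: m_assoc inv_mult_group)
  also have "\<dots> = m \<otimes> (h \<otimes> n \<otimes> inv h) \<otimes> (k \<otimes> inv m \<otimes> inv k) \<otimes> k"
    using carr by (simp add: hk m_assoc)
  finally have conj: "g \<otimes> u \<otimes> inv g = m \<otimes> (h \<otimes> n \<otimes> inv h) \<otimes> (k \<otimes> inv m \<otimes> inv k) \<otimes> k" .
  have "h \<otimes> n \<otimes> inv h \<in> N" "k \<otimes> inv m \<otimes> inv k \<in> N"
    using normal.inv_op_closed2[OF N] carr n subgroup.m_inv_closed[OF N_sub m] by auto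
  then have "m \<otimes> (h \<otimes> n \<otimes> inv h) \<otimes> (k \<otimes> inv m \<otimes> inv k) \<in> N"
    using m by (simp add: subgroup.m_closed[OF N_sub])
  with k show "g \<otimes> u \<otimes> inv g \<in> N <#> L"
    unfolding conj set_mult_def by blast
qed

lemma p_subgroup_subset_of_set_mult:
  fixes p :: nat
  assumes Q: "subgroup Q G" "finite Q" "card Q = p ^ k" and QNP: "Q \<subseteq> N <#> P"
    and N: "subgroup N G" "finite N" "coprime p (card N)"
    and P: "subgroup P G" "finite P" "card P = p ^ j" "P \<subseteq> centralizer G N"
  shows "Q \<subseteq> P"
proof
  fix z assume z: "z \<in> Q"
  then obtain m b where m: "m \<in> N" and b: "b \<in> P" and zmb: "z = m \<otimes> b"
    using QNP unfolding set_mult_def by blast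
  have carr: "m \<in> carrier G" "b \<in> carrier G"
    using subgroup.mem_carrier[OF N(1) m] subgroup.mem_carrier[OF P(1) b] .
  define e where "e = p ^ k * p ^ j"
  have "z [^] e = \<one>"
    using pow_card_subgroup[OF Q(1,2) z] subgroup.mem_carrier[OF Q(1) z]
    by (simp add: e_def Q(3) nat_pow_pow[symmetric])
  moreover have "b [^] e = \<one>"
    using pow_card_subgroup[OF P(1,2) b] carr(2)
    by (simp add: e_def P(3) mult.commute[of "p ^ k"] nat_pow_pow[symmetric])
  moreover have "z [^] e = m [^] e \<otimes> b [^] e"
    using centralizerD[OF subsetD[OF P(4) b] m] carr by (simp add: zmb pow_mult_distrib)
  ultimately have "m [^] e = \<one>"
    using carr by simp
  moreover have "m [^] card N = \<one>"
    using pow_card_subgroup[OF N(1,2) m] .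
  moreover have "coprime e (card N)"
    using N(3) by (simp add: e_def)
  ultimately have "m = \<one>"
    using eq_one_if_pow_coprime[OF carr(1)] by blast
  with zmb b carr show "z \<in> P" by simp
qed

lemma normal_p_subgroup_subset_centralizer:
  fixes p :: nat
  assumes N: "N \<lhd> G" "finite N" "coprime p (card N)"
    and K: "subgroup K G" "N \<subseteq> K"
    and Q: "Q \<lhd> G\<lparr>carrier := K\<rparr>" "finite Q" "card Q = p ^ k"
  shows "Q \<subseteq> centralizer G N"
proof (rule mutually_normalizing_coprime_subgroups_commute)
  show Q_sub: "subgroup Q G"
    using K(1) normal_imp_subgroup[OF Q(1)] by (rule incl_subgroup)
  show "subgroup N G"
    using N(1) by (rule normal_imp_subgroup)
  show "coprime (card Q) (card N)"
    using N(3) by (simp add: Q(3))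
  fix a b assume a: "a \<in> Q" and b: "b \<in> N"
  show "a \<otimes> b \<otimes> inv a \<in> N"
    using normal.inv_op_closed2[OF N(1) subgroup.mem_carrier[OF Q_sub a] b] .
  have "b \<otimes>\<^bsub>G\<lparr>carrier := K\<rparr>\<^esub> a \<otimes>\<^bsub>G\<lparr>carrier := K\<rparr>\<^esub> inv\<^bsub>G\<lparr>carrier := K\<rparr>\<^esub> b \<in> Q"
    using normal.inv_op_closed2[OF Q(1)] a b K(2) by auto
  moreover have "b \<in> K"
    using b K(2) by blast
  ultimately show "b \<otimes> a \<otimes> inv b \<in> Q"
    using m_inv_consistent[OF K(1)] by simp
qed (use N Q in auto)

lemma O_p_subgroup_eqI:
  fixes p :: nat
  assumes fin: "finite (carrier G)" and N: "N \<lhd> G" "coprime p (card N)"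
    and K: "subgroup K G" "N \<subseteq> K"
    and P: "P \<lhd> G\<lparr>carrier := K\<rparr>" "card P = p ^ j" "P \<subseteq> centralizer G N"
    and K_centralizer: "K \<inter> centralizer G N \<subseteq> N <#> P"
  shows "O_p (G\<lparr>carrier := K\<rparr>) p = P"
proof (rule O_p_eqI)
  have N_sub: "subgroup N G"
    using N(1) by (rule normal_imp_subgroup)
  have P_sub: "subgroup P G"
    using K(1) normal_imp_subgroup[OF P(1)] by (rule incl_subgroup)
  have fin_N: "finite N" and fin_P: "finite P"
    using finite_subset[OF subgroup.subset[OF N_sub] fin] finite_subset[OF subgroup.subset[OF P_sub] fin] .
  show "P \<lhd> G\<lparr>carrier := K\<rparr>"
    by (fact P(1))
  show "p_subgroup (G\<lparr>carrier := K\<rparr>) p P"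
    unfolding p_subgroup_def using normal_imp_subgroup[OF P(1)] fin_P P(2) by blast
  fix Q assume Q: "Q \<lhd> G\<lparr>carrier := K\<rparr>" "p_subgroup (G\<lparr>carrier := K\<rparr>) p Q"
  then obtain k where Q_subK: "subgroup Q (G\<lparr>carrier := K\<rparr>)" and fin_Q: "finite Q"
    and card_Q: "card Q = p ^ k"
    unfolding p_subgroup_def by blast
  have "Q \<subseteq> centralizer G N"
    using normal_p_subgroup_subset_centralizer[OF N(1) fin_N N(2) K Q(1) fin_Q card_Q] .
  moreover have "Q \<subseteq> K"
    using subgroup.subset[OF Q_subK] by simp
  ultimately have "Q \<subseteq> N <#> P"
    using K_centralizer by blast
  moreover have "subgroup Q G"
    using K(1) Q_subK by (rule incl_subgroup)
  ultimately show "Q \<subseteq> P"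
    using p_subgroup_subset_of_set_mult[OF _ fin_Q card_Q _ N_sub fin_N N(2) P_sub fin_P P(2,3)]
    by blast
qed

lemma O_p_normal_set_mult_eq_one:
  fixes p :: nat
  assumes fin: "finite (carrier G)"
    and N: "N \<lhd> G" "N \<subseteq> centralizer G N" "coprime p (card N)"
    and L: "subgroup L G" "L \<inter> centralizer G N = {\<one>}"
  shows "O_p (G\<lparr>carrier := N <#> L\<rparr>) p = {\<one>}"
proof (rule O_p_subgroup_eqI[OF fin N(1) N(3)])
  have N_carr: "N \<subseteq> carrier G"
    using subgroup.subset[OF normal_imp_subgroup[OF N(1)]] .
  have C: "subgroup (centralizer G N) G"
    using N_carr by (rule subgroup_centralizer)
  show K: "subgroup (N <#> L) G"
    using N(1) L(1) by (rule subgroup_normal_set_mult)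
  show "N \<subseteq> N <#> L"
    using L(1) N_carr by (rule subset_set_mult_left)
  interpret K: group "G\<lparr>carrier := N <#> L\<rparr>"
    using K by (rule subgroup_imp_group)
  show "{\<one>} \<lhd> G\<lparr>carrier := N <#> L\<rparr>"
    using K.one_is_normal by simp
  show "card {\<one>} = p ^ 0"
    by simp
  show "{\<one>} \<subseteq> centralizer G N"
    using subgroup.one_closed[OF C] by simp
  show "(N <#> L) \<inter> centralizer G N \<subseteq> N <#> {\<one>}"
    using set_mult_Int_subgroup[OF C N(2) subgroup.subset[OF L(1)]] L(2) by simp
qed

end

locale faithful_trivial_action = group +
  fixes N :: "'a set" and x y :: 'a
  assumes N_normal: "N \<lhd> G"
    and N_abelian: "N \<subseteq> centralizer G N"
    and complement: "N <#> generate G {x, y} = carrier G"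
    and x_in: "x \<in> carrier G" and y_in: "y \<in> carrier G"
    and xy_commute: "x \<otimes> y = y \<otimes> x"
    and x_faithful: "generate G {x} \<inter> centralizer G N = {\<one>}"
    and y_trivial: "y \<in> centralizer G N"
    and ord_y_dvd_ord_x: "ord y dvd ord x"
begin

lemma N_subset: "N \<subseteq> carrier G"
  using subgroup.subset[OF normal_imp_subgroup[OF N_normal]] .

lemma subgroup_centralizer_N: "subgroup (centralizer G N) G"
  using N_subset by (rule subgroup_centralizer)

lemma complement_abelian: "generate G {x, y} \<subseteq> centralizer G (generate G {x, y})"
proof (rule generate_commuting_subset_centralizer)
  show "{x, y} \<subseteq> carrier G"
    using x_in y_in by simp
  show "{x, y} \<subseteq> centralizer G {x, y}"
    using x_in y_in xy_commute by (auto intro!: centralizerI)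
qed

lemma y_central: "y \<in> centralizer G (carrier G)"
proof -
  have "y \<in> generate G {x, y}"
    by (simp add: generate.incl)
  then have "y \<in> centralizer G (generate G {x, y})"
    using complement_abelian by blast
  then have "y \<in> centralizer G (N <#> generate G {x, y})"
    using N_subset generate_incl x_in y_in y_trivial by (intro centralizer_set_mult) auto
  then show ?thesis
    by (simp add: complement)
qed

lemma normal_generate_y: "generate G {y} \<lhd> G"
  using y_in y_central
  by (intro normal_if_subset_center generate_is_subgroup generate_subset_centralizer) auto

lemma generate_y_subset_centralizer: "generate G {y} \<subseteq> centralizer G N"
  using N_subset y_trivial by (intro generate_subset_centralizer) auto

lemma carrier_Int_centralizer: "carrier G \<inter> centralizer G N \<subseteq> N <#> generate G {y}"
proof -
  let ?C = "centralizer G N"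
  have H_carr: "generate G {x, y} \<subseteq> carrier G"
    using x_in y_in by (intro generate_incl) auto
  have "generate G {x, y} \<subseteq> generate G {y} <#> generate G {x}"
    using normal_generate_y x_in
    by (intro generate_subset_normal_set_mult generate_is_subgroup) (auto intro: generate.incl)
  then have "generate G {x, y} \<inter> ?C \<subseteq> (generate G {y} <#> generate G {x}) \<inter> ?C"
    by blast
  also have "\<dots> = generate G {y} <#> (generate G {x} \<inter> ?C)"
    using x_in generate_y_subset_centralizer
    by (intro set_mult_Int_subgroup subgroup_centralizer_N generate_incl) auto
  also have "\<dots> = generate G {y}"
    using x_faithful y_in by (simp add: set_mult_one generate_incl)
  finally have "generate G {x, y} \<inter> ?C \<subseteq> generate G {y}" .
  moreover have "carrier G \<inter> ?C = N <#> (generate G {x, y} \<inter> ?C)"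
    unfolding complement[symmetric]
    using N_abelian H_carr by (rule set_mult_Int_subgroup[OF subgroup_centralizer_N])
  ultimately show ?thesis
    using mono_set_mult[of N N _ "generate G {y}" G] by auto
qed

lemma generate_mult_Int_centralizer: "generate G {x \<otimes> y} \<inter> centralizer G N = {\<one>}"
proof -
  have "w = \<one>" if w: "w \<in> generate G {x \<otimes> y}" "w \<in> centralizer G N" for w
  proof -
    obtain i :: int where "w = (x \<otimes> y) [^] i"
      using w(1) generate_pow[of "x \<otimes> y"] x_in y_in by auto
    then have w_eq: "w = x [^] i \<otimes> y [^] i"
      using int_pow_mult_distrib[OF xy_commute x_in y_in] by simp
    have y_pow: "y [^] i \<in> centralizer G N"
      using generate_y_subset_centralizer generate_pow[OF y_in] by blast
    have "x [^] i = w \<otimes> inv (y [^] i)"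
      using w_eq x_in y_in by (simp add: m_assoc)
    then have "x [^] i \<in> centralizer G N"
      using w(2) y_pow subgroup_centralizer_N by (simp add: subgroup.m_closed subgroup.m_inv_closed)
    moreover have "x [^] i \<in> generate G {x}"
      using generate_pow[OF x_in] by blast
    ultimately have x_pow: "x [^] i = \<one>"
      using x_faithful by blast
    then have "int (ord y) dvd i"
      using int_pow_eq_id[OF x_in] ord_y_dvd_ord_x by (meson dvd_trans int_dvd_int_iff)
    then have "y [^] i = \<one>"
      using int_pow_eq_id[OF y_in] by simp
    with w_eq x_pow show "w = \<one>"
      by simp
  qed
  moreover have "\<one> \<in> generate G {x \<otimes> y}" "\<one> \<in> centralizer G N"
    using generate.one subgroup.one_closed[OF subgroup_centralizer_N] by auto
  ultimately show ?thesis
    by blast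
qed

lemma normal_U: "N <#> generate G {x} \<lhd> G"
  using N_normal complement complement_abelian
proof (rule set_mult_normal_if_abelian_complement)
  show "subgroup (generate G {x}) G"
    using x_in by (intro generate_is_subgroup) simp
  show "generate G {x} \<subseteq> generate G {x, y}"
    by (intro mono_generate) simp
qed

lemma normal_V: "N <#> generate G {x \<otimes> y} \<lhd> G"
  using N_normal complement complement_abelian
proof (rule set_mult_normal_if_abelian_complement)
  show "subgroup (generate G {x \<otimes> y}) G"
    using x_in y_in by (intro generate_is_subgroup) simp
  show "generate G {x \<otimes> y} \<subseteq> generate G {x, y}"
    using x_in y_in
    by (intro generate_subgroup_incl generate_is_subgroup) (auto intro: generate.eng generate.incl)
qed

lemma set_mult_U_V: "(N <#> generate G {x}) <#> (N <#> generate G {x \<otimes> y}) = carrier G"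
  (is "?U <#> ?V = _")
proof
  have xy: "x \<otimes> y \<in> carrier G"
    using x_in y_in by simp
  have U: "?U \<lhd> G" and V: "subgroup ?V G"
    using normal_U normal_imp_subgroup[OF normal_V] .
  have UV: "subgroup (?U <#> ?V) G"
    using U V by (rule subgroup_normal_set_mult)
  show "?U <#> ?V \<subseteq> carrier G"
    using subgroup.subset[OF UV] .
  have U_UV: "?U \<subseteq> ?U <#> ?V" and V_UV: "?V \<subseteq> ?U <#> ?V"
    using subset_set_mult_left[OF V subgroup.subset[OF normal_imp_subgroup[OF U]]]
      subset_set_mult_right[OF normal_imp_subgroup[OF U] subgroup.subset[OF V]] .
  have N_UV: "N \<subseteq> ?U <#> ?V"
    using U_UV subset_set_mult_left[OF generate_is_subgroup N_subset] x_in by blast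
  have "generate G {x} \<subseteq> ?U" "generate G {x \<otimes> y} \<subseteq> ?V"
    using x_in xy
    by (intro subset_set_mult_right normal_imp_subgroup[OF N_normal] generate_incl; simp)+
  then have x_UV: "x \<in> ?U <#> ?V" and xy_UV: "x \<otimes> y \<in> ?U <#> ?V"
    using U_UV V_UV generate.incl[of x "{x}" G] generate.incl[of "x \<otimes> y" "{x \<otimes> y}" G] by auto
  have "inv x \<otimes> (x \<otimes> y) \<in> ?U <#> ?V"
    using subgroup.m_closed[OF UV subgroup.m_inv_closed[OF UV x_UV] xy_UV] .
  then have "y \<in> ?U <#> ?V"
    using x_in y_in by (simp add: m_assoc[symmetric])
  then have "generate G {x, y} \<subseteq> ?U <#> ?V"
    using x_UV UV by (intro generate_subgroup_incl) auto
  then show "carrier G \<subseteq> ?U <#> ?V"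
    using N_UV UV complement set_mult_subset_subgroup by metis
qed

context
  fixes p :: nat
  assumes finite_carrier: "finite (carrier G)" and coprime_p_N: "coprime p (card N)"
begin

lemma O_p_eq_generate_y:
  assumes "ord y = p"
  shows "O_p G p = generate G {y}"
proof -
  have "O_p (G\<lparr>carrier := carrier G\<rparr>) p = generate G {y}"
  proof (rule O_p_subgroup_eqI[OF finite_carrier N_normal coprime_p_N subgroup_self N_subset])
    show "generate G {y} \<lhd> G\<lparr>carrier := carrier G\<rparr>"
      using normal_generate_y by simp
    show "card (generate G {y}) = p ^ 1"
      using generate_pow_card[OF y_in] assms by simp
  qed (fact generate_y_subset_centralizer carrier_Int_centralizer)+
  then show ?thesis
    by simp
qed

lemma O_p_U: "O_p (G\<lparr>carrier := N <#> generate G {x}\<rparr>) p = {\<one>}"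
  using finite_carrier N_normal N_abelian coprime_p_N _ x_faithful
proof (rule O_p_normal_set_mult_eq_one)
  show "subgroup (generate G {x}) G"
    using x_in by (intro generate_is_subgroup) simp
qed

lemma O_p_V: "O_p (G\<lparr>carrier := N <#> generate G {x \<otimes> y}\<rparr>) p = {\<one>}"
  using finite_carrier N_normal N_abelian coprime_p_N _ generate_mult_Int_centralizer
proof (rule O_p_normal_set_mult_eq_one)
  show "subgroup (generate G {x \<otimes> y}) G"
    using x_in y_in by (intro generate_is_subgroup) simp
qed

end

end

theorem theorem3p3:
  fixes G (structure) and p q :: nat and N :: "'a set" and x y :: 'a
  assumes "group G" and "finite (carrier G)"
    and "Factorial_Ring.prime p" and "Factorial_Ring.prime q" and "q mod p = 1"
    and N_normal: "N \<lhd> G" and N_card: "card N = q"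
    and x_in: "x \<in> carrier G" and y_in: "y \<in> carrier G"
    and "group.ord G x = p" and "group.ord G y = p"
    and "x \<otimes> y = y \<otimes> x"
    and H_card: "card (generate G {x, y}) = p ^ 2"
    and "N \<inter> generate G {x, y} = {\<one>}"
    and "N <#> generate G {x, y} = carrier G"
    and x_faithful: "\<forall>h \<in> generate G {x}. (\<forall>n \<in> N. h \<otimes> n \<otimes> inv h = n) \<longrightarrow> h = \<one>"
    and y_trivial: "\<forall>n \<in> N. y \<otimes> n \<otimes> inv y = n"
  defines "U \<equiv> N <#> generate G {x}"
    and "V \<equiv> N <#> generate G {x \<otimes> y}"
  shows "subnormal G U \<and> subnormal G V \<and> U <#> V = carrier G
     \<and> O_p G p = generate G {y}
     \<and> O_p (G\<lparr>carrier := U\<rparr>) p = {\<one>}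
     \<and> O_p (G\<lparr>carrier := V\<rparr>) p = {\<one>}
     \<and> O_p G p \<noteq> O_p (G\<lparr>carrier := U\<rparr>) p <#> O_p (G\<lparr>carrier := V\<rparr>) p"
proof -
  interpret group G by fact
  have coprime: "coprime p (card N)"
    using assms(3-5) N_card by (intro primes_coprime) auto
  have N_abelian: "N \<subseteq> centralizer G N"
    using prime_card_subgroup_abelian[OF normal_imp_subgroup[OF N_normal]] assms(4)
    unfolding N_card .
  have N_carr: "N \<subseteq> carrier G"
    using subgroup.subset[OF normal_imp_subgroup[OF N_normal]] .
  interpret faithful_trivial_action G N x y
  proof (intro faithful_trivial_action.intro faithful_trivial_action_axioms.intro)
    show "generate G {x} \<inter> centralizer G N = {\<one>}"
      using x_faithful centralizer_iff_conj[OF N_carr] generate.one[of G "{x}"]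
        subgroup.one_closed[OF subgroup_centralizer[OF N_carr]] by blast
    show "y \<in> centralizer G N"
      using y_trivial y_in centralizer_iff_conj[OF N_carr] by blast
  qed (use assms N_abelian in simp_all)
  have "generate G {y} \<noteq> {\<one>}"
    using generate_pow_card[OF y_in] \<open>Factorial_Ring.prime p\<close> \<open>ord y = p\<close> by fastforce
  then show ?thesis
    using O_p_eq_generate_y[OF \<open>finite (carrier G)\<close> coprime \<open>ord y = p\<close>]
      O_p_U[OF \<open>finite (carrier G)\<close> coprime] O_p_V[OF \<open>finite (carrier G)\<close> coprime]
      subnormal_if_normal normal_U normal_V set_mult_U_V set_mult_one[of "{\<one>}"]
    unfolding U_def V_def by auto
qed

end
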